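(* Consider the stochastic quadratic problem with symmetric positive definite $Q=(q_{ij})\in\mathbb{R}^{d\times d}$ having eigenvalues $\lambda_1,\dots,\lambda_d>0$, and fix $\theta$. For the stochastic direction $z=-\operatorname{sign}(g(\theta))$, the expected improvement with optimal step size satisfies $$\mathcal{I}_{\mathrm{SSD}}(\theta)\ge\frac12\,\frac{\Big(\sum_{i=1}^d(2\rho_i-1)\,|\nabla\mathcal{L}(\theta)_i|\Big)^2}{\sum_{i=1}^d\lambda_i}\;p_{\mathrm{diag}}(Q),$$ where $\rho_i=\mathbf{P}[\operatorname{sign}(g(\theta)_i)=\operatorname{sign}(\nabla\mathcal{L}(\theta)_i)]$ and $p_{\mathrm{diag}}(Q)=\big(\sum_{i=1}^d|q_{ii}|\big)/\big(\sum_{i,j=1}^d|q_{ij}|\big)$.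
   Context: Stochastic quadratic problem (sQP): loss $\ell(\theta;x)=\frac12(\theta-x)^TQ(\theta-x)$ with data $x\sim\mathcal{N}(x^\ast,\nu^2I)$, $\nu\ge0$; objective $\mathcal{L}(\theta)=\mathbf{E}_x[\ell(\theta;x)]$, with $\nabla\mathcal{L}(\theta)=Q(\theta-x^\ast)$; stochastic gradient $g(\theta)=Q(\theta-x)\sim\mathcal{N}(\nabla\mathcal{L}(\theta),\nu^2QQ)$. $\operatorname{sign}$ is applied element-wise with $\operatorname{sign}(0)=1$. For a random direction $z$ with $\mathbf{E}[z^TQz]>0$, the expected improvement with the optimal step size $\alpha_\ast=-\nabla\mathcal{L}(\theta)^T\mathbf{E}[z]/\mathbf{E}[z^TQz]$ is $\mathcal{I}(\theta):=|\mathbf{E}[\mathcal{L}(\theta+\alpha_\ast z)]-\mathcal{L}(\theta)|=\frac{(\nabla\mathcal{L}(\theta)^T\mathbf{E}[z])^2}{2\,\mathbf{E}[z^TQz]}$. *)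

theory Defs
  imports "HOL-Probability.Probability"
begin

definition sgn1 :: "real \<Rightarrow> real" where
  "sgn1 t = (if t \<ge> 0 then 1 else -1)"

definition sqp_data :: "real^'d \<Rightarrow> real \<Rightarrow> (real^'d) measure" where
  "sqp_data xstar \<nu> =
     (if \<nu> = 0 then return borel xstar
      else density lborel (\<lambda>x. ennreal (\<Prod>i\<in>UNIV. normal_density (xstar $ i) \<nu> (x $ i))))"

definition sqp_loss :: "real^'d^'d \<Rightarrow> real^'d \<Rightarrow> real^'d \<Rightarrow> real" where
  "sqp_loss Q \<theta> x = 1/2 * ((\<theta> - x) \<bullet> (Q *v (\<theta> - x)))"

definition sqp_grad :: "real^'d^'d \<Rightarrow> real^'d \<Rightarrow> real^'d \<Rightarrow> real^'d" where
  "sqp_grad Q xstar \<theta> = Q *v (\<theta> - xstar)"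

definition sqp_stoch_grad :: "real^'d^'d \<Rightarrow> real^'d \<Rightarrow> real^'d \<Rightarrow> real^'d" where
  "sqp_stoch_grad Q \<theta> x = Q *v (\<theta> - x)"

definition exp_improvement ::
  "(real^'d) measure \<Rightarrow> real^'d^'d \<Rightarrow> real^'d \<Rightarrow> (real^'d \<Rightarrow> real^'d) \<Rightarrow> real" where
  "exp_improvement M Q gradL z =
     (gradL \<bullet> (\<integral>x. z x \<partial>M))\<^sup>2 / (2 * (\<integral>x. z x \<bullet> (Q *v z x) \<partial>M))"

definition ssd_dir :: "real^'d^'d \<Rightarrow> real^'d \<Rightarrow> real^'d \<Rightarrow> real^'d" where
  "ssd_dir Q \<theta> x = (\<chi> i. - sgn1 (sqp_stoch_grad Q \<theta> x $ i))"

definition ssd_improvement :: "real^'d^'d \<Rightarrow> real^'d \<Rightarrow> real \<Rightarrow> real^'d \<Rightarrow> real" where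
  "ssd_improvement Q xstar \<nu> \<theta> =
     exp_improvement (sqp_data xstar \<nu>) Q (sqp_grad Q xstar \<theta>) (ssd_dir Q \<theta>)"

definition sign_agree_prob :: "real^'d^'d \<Rightarrow> real^'d \<Rightarrow> real \<Rightarrow> real^'d \<Rightarrow> 'd \<Rightarrow> real" where
  "sign_agree_prob Q xstar \<nu> \<theta> i =
     measure (sqp_data xstar \<nu>)
       {x. sgn1 (sqp_stoch_grad Q \<theta> x $ i) = sgn1 (sqp_grad Q xstar \<theta> $ i)}"

definition p_diag :: "real^'d^'d \<Rightarrow> real" where
  "p_diag Q = (\<Sum>i\<in>UNIV. \<bar>Q $ i $ i\<bar>) / (\<Sum>i\<in>UNIV. \<Sum>j\<in>UNIV. \<bar>Q $ i $ j\<bar>)"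

definition diag_mat :: "('d \<Rightarrow> real) \<Rightarrow> real^'d^'d" where
  "diag_mat l = (\<chi> i j. if i = j then l i else 0)"

end

theory Submission
  imports Defs
begin

(* Every component of z = -sign(g) is +1 or -1. Hence E[z_i] = -sign(grad_i) (2 rho_i - 1), so
   the numerator (grad^T E[z])^2 is exactly (sum_i (2 rho_i - 1) |grad_i|)^2, while pointwise
   0 < z^T Q z <= sum_ij |q_ij| bounds the denominator. The diagonal of a positive definite Q is
   positive, so sum_i |q_ii| = tr Q = sum_i lambda_i, and dividing by sum_ij |q_ij| is the same as
   dividing by sum_i lambda_i and multiplying by p_diag(Q). *)

lemma abs_sgn1 [simp]: "\<bar>sgn1 t\<bar> = 1"
  by (simp add: sgn1_def)

lemma sgn1_mult_abs: "sgn1 t * \<bar>t\<bar> = t"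
  by (simp add: sgn1_def)

lemma borel_measurable_sgn1 [measurable]: "sgn1 \<in> borel_measurable borel"
  unfolding sgn1_def[abs_def] by measurable

lemma sets_sqp_data [measurable_cong]: "sets (sqp_data xstar \<nu>) = sets borel"
  by (simp add: sqp_data_def)

lemma space_sqp_data [simp]: "space (sqp_data xstar \<nu>) = UNIV"
  using sets_eq_imp_space_eq[OF sets_sqp_data] by simp

lemma borel_measurable_stoch_grad_nth [measurable]:
  "(\<lambda>x. sqp_stoch_grad Q \<theta> x $ i) \<in> borel_measurable borel"
  unfolding sqp_stoch_grad_def
  by (intro borel_measurable_continuous_onI continuous_intros
        bounded_linear.continuous_on[OF matrix_vector_mul_bounded_linear])

lemma borel_measurable_cart:
  fixes f :: "'a \<Rightarrow> real^'n"
  assumes "\<And>i. (\<lambda>x. f x $ i) \<in> borel_measurable M"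
  shows "f \<in> borel_measurable M"
proof (subst borel_measurable_euclidean_space, intro ballI)
  fix b :: "real^'n" assume "b \<in> Basis"
  then obtain i where "b = axis i 1" by (auto simp: Basis_vec_def)
  then show "(\<lambda>x. f x \<bullet> b) \<in> borel_measurable M"
    using assms by (simp add: inner_axis)
qed

lemma borel_measurable_ssd_dir [measurable]:
  "ssd_dir Q \<theta> \<in> borel_measurable (sqp_data xstar \<nu>)"
  by (rule borel_measurable_cart) (simp add: ssd_dir_def, measurable)

lemma (in prob_space) expectation_sgn1_agreement:
  assumes [measurable]: "f \<in> borel_measurable M"
  shows "sgn1 c * expectation (\<lambda>x. sgn1 (f x))
    = 2 * prob {x \<in> space M. sgn1 (f x) = sgn1 c} - 1"
proof -
  let ?A = "{x \<in> space M. sgn1 (f x) = sgn1 c}"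
  have A: "?A \<in> events" by measurable
  have agreement: "sgn1 c * sgn1 (f x) = 2 * indicator ?A x - 1" if "x \<in> space M" for x
    using that by (simp add: sgn1_def indicator_def)
  have "sgn1 c * expectation (\<lambda>x. sgn1 (f x)) = expectation (\<lambda>x. sgn1 c * sgn1 (f x))"
    by simp
  also have "\<dots> = expectation (\<lambda>x. 2 * indicator ?A x - 1)"
    by (rule Bochner_Integration.integral_cong[OF refl agreement])
  also have "\<dots> = 2 * prob ?A - 1"
    using A by (subst Bochner_Integration.integral_diff) (auto simp: prob_space emeasure_eq_measure)
  finally show ?thesis .
qed

lemma prob_space_sqp_data:
  fixes xstar :: "real^'d"
  assumes "0 \<le> \<nu>"
  shows "prob_space (sqp_data xstar \<nu>)"
proof (cases "\<nu> = 0")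
  case True
  then show ?thesis by (simp add: sqp_data_def prob_space_return)
next
  case False
  with assms have "0 < \<nu>" by simp
  let ?f = "\<lambda>b t. normal_density (xstar \<bullet> b) \<nu> t"
  have inj: "inj_on (\<lambda>i::'d. axis i (1::real)) UNIV"
    by (auto simp: inj_on_def axis_eq_axis)
  have Basis_eq: "(Basis :: (real^'d) set) = range (\<lambda>i. axis i 1)"
    by (auto simp: Basis_vec_def)
  have prod_Basis:
    "(\<Prod>i\<in>UNIV. normal_density (xstar $ i) \<nu> (x $ i)) = (\<Prod>b\<in>Basis. ?f b (x \<bullet> b))"
    for x :: "real^'d"
    unfolding Basis_eq by (subst prod.reindex[OF inj]) (simp add: inner_axis)
  have "(\<integral>\<^sup>+x. ennreal (\<Prod>i\<in>UNIV. normal_density (xstar $ i) \<nu> (x $ i)) \<partial>lborel)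
      = (\<integral>\<^sup>+x. (\<Prod>b\<in>Basis. ennreal (?f b (x \<bullet> b))) \<partial>lborel)"
    unfolding prod_Basis by (simp add: prod_ennreal)
  also have "\<dots> = (\<Prod>b\<in>(Basis::(real^'d) set). (\<integral>\<^sup>+t. ennreal (?f b t) \<partial>lborel))"
    by (rule nn_integral_lborel_prod) auto
  also have "\<dots> = 1"
  proof (rule prod.neutral, intro ballI)
    fix b :: "real^'d"
    interpret normal: prob_space "density lborel (normal_density (xstar \<bullet> b) \<nu>)"
      using \<open>0 < \<nu>\<close> by (rule prob_space_normal_density)
    show "(\<integral>\<^sup>+t. ennreal (?f b t) \<partial>lborel) = 1"
      using normal.emeasure_space_1 by (simp add: emeasure_density)
  qed
  finally show ?thesis
    using False by (intro prob_spaceI) (simp add: sqp_data_def emeasure_density)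
qed

lemma integrable_ssd_dir:
  fixes Q :: "real^'d^'d"
  assumes "0 \<le> \<nu>"
  shows "integrable (sqp_data xstar \<nu>) (ssd_dir Q \<theta>)"
proof -
  interpret prob_space "sqp_data xstar \<nu>"
    using assms by (rule prob_space_sqp_data)
  have "norm (ssd_dir Q \<theta> x) \<le> real CARD('d)" for x
  proof -
    have "norm (ssd_dir Q \<theta> x) \<le> (\<Sum>i\<in>UNIV. \<bar>ssd_dir Q \<theta> x $ i\<bar>)"
      by (rule norm_le_l1_cart)
    then show ?thesis
      by (simp add: ssd_dir_def)
  qed
  then show ?thesis
    by (intro integrable_const_bound[where B="real CARD('d)"] AE_I2) measurable
qed

lemma sqp_grad_inner_expected_ssd_dir:
  fixes Q :: "real^'d^'d"
  assumes "0 \<le> \<nu>"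
  shows "sqp_grad Q xstar \<theta> \<bullet> (\<integral>x. ssd_dir Q \<theta> x \<partial>sqp_data xstar \<nu>) =
    - (\<Sum>i\<in>UNIV. (2 * sign_agree_prob Q xstar \<nu> \<theta> i - 1) * \<bar>sqp_grad Q xstar \<theta> $ i\<bar>)"
proof -
  interpret prob_space "sqp_data xstar \<nu>"
    using assms by (rule prob_space_sqp_data)
  define G where "G = sqp_grad Q xstar \<theta>"
  define g where "g i x = sqp_stoch_grad Q \<theta> x $ i" for i x
  have [measurable]: "g i \<in> borel_measurable (sqp_data xstar \<nu>)" for i
    unfolding g_def by measurable
  have z_nth: "ssd_dir Q \<theta> x $ i = - sgn1 (g i x)" for x i
    by (simp add: ssd_dir_def g_def)
  have "integrable (sqp_data xstar \<nu>) (ssd_dir Q \<theta>)"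
    using assms by (rule integrable_ssd_dir)
  then have expectation_nth:
    "(\<integral>x. ssd_dir Q \<theta> x \<partial>sqp_data xstar \<nu>) $ i = - expectation (\<lambda>x. sgn1 (g i x))" for i
    using integral_bounded_linear[OF bounded_linear_vec_nth, of "sqp_data xstar \<nu>" "ssd_dir Q \<theta>" i]
    by (simp add: z_nth)
  have agreement:
    "sgn1 (G $ i) * expectation (\<lambda>x. sgn1 (g i x)) = 2 * sign_agree_prob Q xstar \<nu> \<theta> i - 1" for i
    using expectation_sgn1_agreement[of "g i" "G $ i"]
    by (simp add: sign_agree_prob_def g_def G_def)
  have component: "G $ i * (\<integral>x. ssd_dir Q \<theta> x \<partial>sqp_data xstar \<nu>) $ i
      = - ((2 * sign_agree_prob Q xstar \<nu> \<theta> i - 1) * \<bar>G $ i\<bar>)" for i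
  proof -
    have "G $ i * (\<integral>x. ssd_dir Q \<theta> x \<partial>sqp_data xstar \<nu>) $ i
        = - (\<bar>G $ i\<bar> * (sgn1 (G $ i) * expectation (\<lambda>x. sgn1 (g i x))))"
      unfolding expectation_nth by (subst (1) sgn1_mult_abs[symmetric]) (simp add: algebra_simps)
    then show ?thesis
      by (simp add: agreement algebra_simps)
  qed
  show ?thesis
    unfolding G_def[symmetric] by (simp add: inner_vec_def component sum_negf)
qed

lemma quadratic_form_le_sum_abs:
  fixes Q :: "real^'n^'n"
  assumes "\<And>i. \<bar>v $ i\<bar> \<le> 1"
  shows "v \<bullet> (Q *v v) \<le> (\<Sum>i\<in>UNIV. \<Sum>j\<in>UNIV. \<bar>Q $ i $ j\<bar>)"
proof -
  have "v \<bullet> (Q *v v) = (\<Sum>i\<in>UNIV. \<Sum>j\<in>UNIV. v $ i * Q $ i $ j * v $ j)"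
    by (simp add: inner_vec_def matrix_vector_mult_def sum_distrib_left mult.assoc)
  also have "\<dots> \<le> (\<Sum>i\<in>UNIV. \<Sum>j\<in>UNIV. \<bar>Q $ i $ j\<bar>)"
  proof (intro sum_mono)
    fix i j
    have "v $ i * Q $ i $ j * v $ j \<le> \<bar>v $ i\<bar> * \<bar>Q $ i $ j\<bar> * \<bar>v $ j\<bar>"
      by (metis abs_ge_self abs_mult)
    also have "\<dots> \<le> 1 * \<bar>Q $ i $ j\<bar> * 1"
      using assms by (intro mult_mono) auto
    finally show "v $ i * Q $ i $ j * v $ j \<le> \<bar>Q $ i $ j\<bar>"
      by simp
  qed
  finally show ?thesis .
qed

lemma exp_improvement_sign_direction_ge:
  fixes Q :: "real^'d^'d" and z :: "real^'d \<Rightarrow> real^'d"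
  assumes "prob_space M"
    and [measurable]: "z \<in> borel_measurable M"
    and sign: "\<And>x i. \<bar>z x $ i\<bar> = 1"
    and pd: "\<forall>v. v \<noteq> 0 \<longrightarrow> 0 < v \<bullet> (Q *v v)"
  shows "(G \<bullet> (\<integral>x. z x \<partial>M))\<^sup>2 / (2 * (\<Sum>i\<in>UNIV. \<Sum>j\<in>UNIV. \<bar>Q $ i $ j\<bar>))
    \<le> exp_improvement M Q G z"
proof -
  interpret prob_space M
    by (fact assms(1))
  define S where "S = (\<Sum>i\<in>UNIV. \<Sum>j\<in>UNIV. \<bar>Q $ i $ j\<bar>)"
  define q where "q = (\<lambda>x. z x \<bullet> (Q *v z x))"
  have q_pos: "0 < q x" for x
  proof -
    have "z x \<noteq> 0"
      using sign[of x undefined] by auto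
    then show ?thesis
      using pd by (simp add: q_def)
  qed
  have q_le: "q x \<le> S" for x
    unfolding q_def S_def using sign by (intro quadratic_form_le_sum_abs) simp
  have "(*v) Q \<in> borel_measurable borel"
    by (intro borel_measurable_continuous_onI linear_continuous_on matrix_vector_mul_bounded_linear)
  then have "q \<in> borel_measurable M"
    unfolding q_def by measurable
  then have q_int: "integrable M q"
    using q_pos q_le by (intro integrable_const_bound[where B=S] AE_I2) (simp add: less_imp_le)
  have "0 < expectation q"
    using integral_less_AE_space[of "\<lambda>_. 0" q] q_int q_pos by (simp add: emeasure_space_1)
  moreover have "expectation q \<le> S"
    using integral_mono[OF q_int, of "\<lambda>_. S"] q_le by (simp add: prob_space)
  ultimately show ?thesis
    unfolding exp_improvement_def q_def[symmetric] S_def[symmetric]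
    by (intro divide_left_mono) auto
qed

lemma diag_pos_if_pos_definite:
  fixes Q :: "real^'n^'n"
  assumes "\<forall>v. v \<noteq> 0 \<longrightarrow> 0 < v \<bullet> (Q *v v)"
  shows "0 < Q $ i $ i"
  using assms[rule_format, of "axis i 1"]
  by (simp add: inner_axis' matrix_vector_mult_basis column_def)

lemma trace_orthogonal_conj:
  fixes U A :: "real^'n^'n"
  assumes "orthogonal_matrix U"
  shows "trace (U ** A ** transpose U) = trace A"
proof -
  have "trace (U ** A ** transpose U) = trace (transpose U ** (U ** A))"
    by (rule trace_mul_sym)
  also have "\<dots> = trace A"
    using assms by (simp add: matrix_mul_assoc orthogonal_matrix)
  finally show ?thesis .
qed

lemma trace_diag_mat: "trace (diag_mat l) = (\<Sum>i\<in>UNIV. l i)"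
  by (simp add: trace_def diag_mat_def)

theorem mainTheorem6:
  fixes Q U :: "real^'d^'d" and lam :: "'d \<Rightarrow> real"
    and xstar \<theta> :: "real^'d" and \<nu> :: real
  assumes sym: "transpose Q = Q"
    and pd: "\<forall>v. v \<noteq> 0 \<longrightarrow> 0 < v \<bullet> (Q *v v)"
    and eig: "orthogonal_matrix U" "Q = U ** diag_mat lam ** transpose U"
    and lam_pos: "\<forall>i. 0 < lam i"
    and nu: "0 \<le> \<nu>"
  shows "ssd_improvement Q xstar \<nu> \<theta> \<ge>
    1/2 * (\<Sum>i\<in>UNIV. (2 * sign_agree_prob Q xstar \<nu> \<theta> i - 1) * \<bar>sqp_grad Q xstar \<theta> $ i\<bar>)\<^sup>2
        / (\<Sum>i\<in>UNIV. lam i) * p_diag Q"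
proof -
  define K where
    "K = (\<Sum>i\<in>UNIV. (2 * sign_agree_prob Q xstar \<nu> \<theta> i - 1) * \<bar>sqp_grad Q xstar \<theta> $ i\<bar>)"
  define S where "S = (\<Sum>i\<in>UNIV. \<Sum>j\<in>UNIV. \<bar>Q $ i $ j\<bar>)"
  have gain: "(sqp_grad Q xstar \<theta> \<bullet> (\<integral>x. ssd_dir Q \<theta> x \<partial>sqp_data xstar \<nu>))\<^sup>2 = K\<^sup>2"
    by (simp add: sqp_grad_inner_expected_ssd_dir[OF nu] K_def)
  have improvement: "K\<^sup>2 / (2 * S) \<le> ssd_improvement Q xstar \<nu> \<theta>"
    unfolding ssd_improvement_def S_def gain[symmetric]
    by (rule exp_improvement_sign_direction_ge
          [OF prob_space_sqp_data[OF nu] borel_measurable_ssd_dir _ pd])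
      (simp add: ssd_dir_def)
  have trace: "(\<Sum>i\<in>UNIV. \<bar>Q $ i $ i\<bar>) = (\<Sum>i\<in>UNIV. lam i)"
  proof -
    have "(\<Sum>i\<in>UNIV. \<bar>Q $ i $ i\<bar>) = trace Q"
      using diag_pos_if_pos_definite[OF pd] by (simp add: trace_def less_imp_le)
    then show ?thesis
      using eig by (simp add: trace_orthogonal_conj trace_diag_mat)
  qed
  have "0 < (\<Sum>i\<in>UNIV. lam i)"
    using lam_pos by (simp add: sum_pos)
  then have "1/2 * K\<^sup>2 / (\<Sum>i\<in>UNIV. lam i) * p_diag Q = K\<^sup>2 / (2 * S)"
    unfolding p_diag_def trace S_def[symmetric] by (simp add: field_simps)
  with improvement show ?thesis
    unfolding K_def by simp
qed

end
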